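(* For every positive integer $k$ divisible by $4$, $$\det A_1(k)=-H_k+\sum_{m=2}^{k+1}(-1)^m\binom{k}{m-1}\zeta(m),\qquad H_k=\sum_{j=1}^{k}\frac1j,$$ and consequently $$\gamma=\lim_{\substack{k\to\infty\\ 4\mid k}}\left(-H_k+\sum_{m=2}^{k+1}(-1)^m\binom{k}{m-1}\zeta(m)\right),$$ where $\gamma$ is the Euler–Mascheroni constant.
   Context: For an integer $k\ge1$, $A(k)$ is the $k\times k$ matrix with entries $A(k)_{ij}=\frac{(-i)^{j-1}}{(j-1)!}$ ($1\le i,j\le k$), $B(k)$ is the column vector with entries $B(k)_i=\zeta(i+1)-\frac1i$, and $A_1(k)$ is $A(k)$ with its first column replaced by $B(k)$. $\zeta$ is the Riemann zeta function. *)

theory Defs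
  imports "HOL-Analysis.Harmonic_Numbers" "Jordan_Normal_Form.Determinant"
begin

definition zeta_nat :: "nat \<Rightarrow> real" where
  "zeta_nat s = (\<Sum>n. 1 / real (Suc n) ^ s)"

text \<open>Matrices are 0-indexed: entry (i,j) here is entry (i+1,j+1) of the paper.
  A(k)_{ij} = (-i)^(j-1)/(j-1)!.\<close>
definition A_mat :: "nat \<Rightarrow> real Matrix.mat" where
  "A_mat k = Matrix.mat k k (\<lambda>(i, j). (- real (Suc i)) ^ j / fact j)"

definition B_vec :: "nat \<Rightarrow> real Matrix.vec" where
  "B_vec k = Matrix.vec k (\<lambda>i. zeta_nat (Suc i + 1) - 1 / real (Suc i))"

definition A1_mat :: "nat \<Rightarrow> real Matrix.mat" where
  "A1_mat k = Matrix.mat k k (\<lambda>(i, j). if j = 0 then vec_index (B_vec k) i else index_mat (A_mat k) (i, j))"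

definition RHS5 :: "nat \<Rightarrow> real" where
  "RHS5 k = - harm k + (\<Sum>m = 2..k + 1. (-1) ^ m * real (k choose (m - 1)) * zeta_nat m)"

end

theory Submission
  imports Defs
begin

text \<open>Multiplying A(k) on the left by the lower unitriangular matrix of signed binomial
coefficients makes it upper triangular with diagonal entries (-1)^i, since its rows then take
i-th finite differences of polynomials of degree j; hence det A(k) = 1 when 4 divides k.
The row vector w with w_i = (-1)^i C(k, i+1) satisfies w A(k) = e_1, so Cramer's rule gives
det A_1(k) = w B(k), which is the stated expression because the sum of (-1)^i C(k, i+1)/(i+1)
over i < k is H_k.

For the limit put q = 1 - 1/(n+1). Expanding (1 - q^k)/(n+1) binomially and summing over n
gives the zeta part of the expression, while the differences in n of the partial sums of
q^j/j for j \<le> k, partial sums of the series of ln(n+1), telescope to H_k. The n-th term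
of the resulting series tends to 1/(n+1) - ln((n+2)/(n+1)) as k \<rightarrow> \<infinity> and lies
in [0, 1/(n+1)^2], so Tannery's theorem yields the series of the Euler-Mascheroni constant.\<close>

lemma alternating_binomial_sum_Suc:
  fixes f :: "nat \<Rightarrow> 'a::comm_ring_1"
  shows "(\<Sum>l\<le>Suc n. (-1)^l * of_nat (Suc n choose l) * f l)
      = (\<Sum>l\<le>n. (-1)^l * of_nat (n choose l) * (f l - f (Suc l)))"
proof -
  have "(\<Sum>l\<le>Suc n. (-1)^l * of_nat (Suc n choose l) * f l)
      = f 0 + (\<Sum>l\<le>n. (-1)^Suc l * of_nat (Suc n choose Suc l) * f (Suc l))"
    by (subst sum.atMost_Suc_shift) simp
  also have "\<dots> = f 0 + (\<Sum>l\<le>n. (-1)^Suc l * of_nat (n choose Suc l) * f (Suc l))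
        - (\<Sum>l\<le>n. (-1)^l * of_nat (n choose l) * f (Suc l))"
  proof -
    have "(-1)^Suc l * of_nat (Suc n choose Suc l) * f (Suc l)
        = (-1)^Suc l * of_nat (n choose Suc l) * f (Suc l)
          - (-1)^l * of_nat (n choose l) * f (Suc l)"
      for l by (simp add: algebra_simps)
    then show ?thesis by (simp add: sum_subtractf)
  qed
  also have "f 0 + (\<Sum>l\<le>n. (-1)^Suc l * of_nat (n choose Suc l) * f (Suc l))
      = (\<Sum>l\<le>Suc n. (-1)^l * of_nat (n choose l) * f l)"
    by (simp only: sum.atMost_Suc_shift) simp
  also have "\<dots> = (\<Sum>l\<le>n. (-1)^l * of_nat (n choose l) * f l)"
    by (simp add: binomial_eq_0)
  finally show ?thesis by (simp add: sum_subtractf algebra_simps)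
qed

lemma alternating_binomial_sum_power:
  fixes a :: "'a::{comm_ring_1, ring_char_0}"
  assumes "m \<le> n"
  shows "(\<Sum>l\<le>n. (-1)^l * of_nat (n choose l) * (of_nat l + a)^m)
      = (if m < n then 0 else (-1)^n * fact n)"
  using assms
proof (induction n arbitrary: m)
  case 0
  then show ?case by simp
next
  case (Suc n)
  define f where "f l = (of_nat l + a)^m" for l
  have diff: "f l - f (Suc l) = - (\<Sum>i<m. of_nat (m choose i) * (of_nat l + a)^i)" for l
  proof -
    have "f (Suc l) = (\<Sum>i\<le>m. of_nat (m choose i) * (of_nat l + a)^i)"
      unfolding f_def using binomial_ring[of "of_nat l + a" 1 m] by (simp add: algebra_simps)
    then show ?thesis by (simp add: f_def lessThan_Suc_atMost[symmetric])
  qed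
  have "(\<Sum>l\<le>n. (-1)^l * of_nat (n choose l) * (f l - f (Suc l)))
      = - (\<Sum>i<m. of_nat (m choose i)
              * (\<Sum>l\<le>n. (-1)^l * of_nat (n choose l) * (of_nat l + a)^i))"
    unfolding diff
    by (simp add: sum_distrib_left sum_distrib_right sum_negf algebra_simps sum.swap[of _ "{..n}"])
  also have "\<dots> = - (\<Sum>i<m. if i = n then of_nat (m choose i) * ((-1)^n * fact n) else 0)"
    using Suc.prems by (intro arg_cong[where f=uminus] sum.cong refl) (simp add: Suc.IH)
  also have "\<dots> = (if m < Suc n then 0 else (-1)^Suc n * fact (Suc n))"
    using Suc.prems by (cases "m = Suc n") (simp_all add: sum.delta)
  finally show ?case using alternating_binomial_sum_Suc[of n f] unfolding f_def by simp
qed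

lemma harm_eq_alternating_binomial_sum:
  "harm k = (\<Sum>i<k. (-1)^i * real (k choose Suc i) / real (Suc i))"
proof (induction k)
  case 0
  then show ?case by (simp add: harm_def)
next
  case (Suc k)
  have absorb: "real (k choose i) / real (Suc i) = real (Suc k choose Suc i) / real (Suc k)" for i
  proof -
    have "real (Suc k) * real (k choose i) = real (Suc k choose Suc i) * real (Suc i)"
      using Suc_times_binomial_eq[of k i] by (metis of_nat_mult)
    then show ?thesis by (simp add: field_simps)
  qed
  have alternating: "(\<Sum>i<Suc k. (-1)^i * real (Suc k choose Suc i)) = 1"
  proof -
    have "(\<Sum>l\<le>Suc k. (-1)^l * real (Suc k choose l)) = 0"
      by (rule choose_alternating_sum) simp
    then show ?thesis
      by (simp only: sum.atMost_shift) (simp add: sum_negf)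
  qed
  have "(\<Sum>i<Suc k. (-1)^i * real (Suc k choose Suc i) / real (Suc i))
      = (\<Sum>i<Suc k. (-1)^i * real (k choose Suc i) / real (Suc i))
        + (\<Sum>i<Suc k. (-1)^i * real (k choose i) / real (Suc i))"
    by (simp add: sum.distrib[symmetric] add_divide_distrib algebra_simps)
  also have "(\<Sum>i<Suc k. (-1)^i * real (k choose Suc i) / real (Suc i)) = harm k"
    using Suc.IH by simp
  also have "(\<Sum>i<Suc k. (-1)^i * real (k choose i) / real (Suc i))
      = (\<Sum>i<Suc k. (-1)^i * real (Suc k choose Suc i)) / real (Suc k)"
  proof -
    have "(\<Sum>i<Suc k. (-1)^i * real (k choose i) / real (Suc i))
        = (\<Sum>i<Suc k. (-1)^i * real (Suc k choose Suc i) / real (Suc k))"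
      by (intro sum.cong refl) (metis absorb times_divide_eq_right)
    then show ?thesis by (simp only: sum_divide_distrib[symmetric])
  qed
  also note alternating
  finally show ?case by (simp add: harm_Suc inverse_eq_divide)
qed

lemma prod_neg_one_power_mult_4: "(\<Prod>i<4 * q. (-1::real)^i) = 1"
proof (induction q)
  case 0
  then show ?case by simp
next
  case (Suc q)
  have "{..<4 * Suc q} = {..<4 * q} \<union> {4 * q, 4 * q + 1, 4 * q + 2, 4 * q + 3}" by auto
  then show ?case using Suc by (simp add: prod.union_disjoint power_add)
qed

lemma smult_one_mat_mult_vec:
  fixes b :: "'a::comm_ring_1 vec"
  assumes b: "b \<in> carrier_vec n"
  shows "(c \<cdot>\<^sub>m 1\<^sub>m n) *\<^sub>v b = c \<cdot>\<^sub>v b"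
proof (rule eq_vecI)
  fix i assume "i < dim_vec (c \<cdot>\<^sub>v b)"
  then have i: "i < n" using b by simp
  have "((c \<cdot>\<^sub>m 1\<^sub>m n) *\<^sub>v b) $ i = (\<Sum>l\<in>{0..<n}. c * (if l = i then 1 else 0) * b $ l)"
    using b i by (simp add: scalar_prod_def)
  also have "\<dots> = (\<Sum>l\<in>{0..<n}. if l = i then c * b $ l else 0)"
    by (intro sum.cong) auto
  finally show "((c \<cdot>\<^sub>m 1\<^sub>m n) *\<^sub>v b) $ i = (c \<cdot>\<^sub>v b) $ i"
    using b i by simp
qed (use b in simp)

lemma det_replace_col_eq_left_combination:
  fixes A :: "'a::field Matrix.mat"
  assumes A: "A \<in> carrier_mat n n" and det: "Determinant.det A \<noteq> 0"
    and b: "b \<in> carrier_vec n" and j: "j < n"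
    and w: "\<And>j'. j' < n \<Longrightarrow> (\<Sum>i<n. w i * A $$ (i, j')) = (if j' = j then 1 else 0)"
  shows "Determinant.det (replace_col A b j) = Determinant.det A * (\<Sum>i<n. w i * b $ i)"
proof -
  define x where "x = (1 / Determinant.det A) \<cdot>\<^sub>v (adj_mat A *\<^sub>v b)"
  have x: "x \<in> carrier_vec n"
    using adj_mat(1)[OF A] b by (simp add: x_def)
  have Ax: "A *\<^sub>v x = b"
  proof -
    have "A *\<^sub>v x = (1 / Determinant.det A) \<cdot>\<^sub>v ((A * adj_mat A) *\<^sub>v b)"
      unfolding x_def using A adj_mat(1)[OF A] b by (simp add: mult_mat_vec)
    also have "\<dots> = b"
      using adj_mat(2)[OF A] b det by (simp add: smult_one_mat_mult_vec smult_smult_assoc)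
    finally show ?thesis .
  qed
  have b_row: "b $ i = (\<Sum>j'<n. A $$ (i, j') * x $ j')" if "i < n" for i
    using A x that by (simp add: Ax[symmetric] scalar_prod_def atLeast0LessThan)
  have "(\<Sum>i<n. w i * b $ i) = (\<Sum>i<n. \<Sum>j'<n. w i * A $$ (i, j') * x $ j')"
    by (intro sum.cong refl) (simp add: b_row sum_distrib_left mult.assoc)
  also have "\<dots> = (\<Sum>j'<n. (\<Sum>i<n. w i * A $$ (i, j')) * x $ j')"
    by (subst sum.swap) (simp add: sum_distrib_right)
  also have "\<dots> = (\<Sum>j'<n. if j' = j then x $ j' else 0)"
    by (intro sum.cong refl) (simp add: w)
  also have "\<dots> = x $ j"
    using j by simp
  finally show ?thesis
    using cramer_lemma_mat[OF A x j] by (simp add: Ax mult.commute)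
qed

lemma power_Suc_diff_bounds:
  fixes a b :: real
  assumes "0 \<le> a" "a \<le> b"
  shows "a^i * (b - a) \<le> (b^Suc i - a^Suc i) / real (Suc i)"
    and "(b^Suc i - a^Suc i) / real (Suc i) \<le> b^i * (b - a)"
proof -
  define S where "S = (\<Sum>p<Suc i. b^p * a^(i - p))"
  have eq: "(b^Suc i - a^Suc i) / real (Suc i) = S / real (Suc i) * (b - a)"
    unfolding S_def diff_power_eq_sum by simp
  have lower_terms: "a^i \<le> b^p * a^(i - p)" if "p < Suc i" for p
  proof -
    have "a^i = a^p * a^(i - p)" using that by (simp flip: power_add)
    also have "\<dots> \<le> b^p * a^(i - p)" using assms by (intro mult_right_mono power_mono) auto
    finally show ?thesis .
  qed
  have "real (Suc i) * a^i \<le> S"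
    unfolding S_def using sum_bounded_below[of "{..<Suc i}" "a^i" "\<lambda>p. b^p * a^(i - p)"] lower_terms
    by simp
  then have lo: "a^i \<le> S / real (Suc i)"
    by (simp add: field_simps)
  have upper_terms: "b^p * a^(i - p) \<le> b^i" if "p < Suc i" for p
  proof -
    have "b^p * a^(i - p) \<le> b^p * b^(i - p)" using assms by (intro mult_left_mono power_mono) auto
    also have "\<dots> = b^i" using that by (simp flip: power_add)
    finally show ?thesis .
  qed
  have "S \<le> real (Suc i) * b^i"
    unfolding S_def using sum_bounded_above[of "{..<Suc i}" "\<lambda>p. b^p * a^(i - p)" "b^i"] upper_terms
    by simp
  then have hi: "S / real (Suc i) \<le> b^i"
    by (simp add: field_simps)
  show "a^i * (b - a) \<le> (b^Suc i - a^Suc i) / real (Suc i)"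
    unfolding eq using lo assms by (intro mult_right_mono) auto
  show "(b^Suc i - a^Suc i) / real (Suc i) \<le> b^i * (b - a)"
    unfolding eq using hi assms by (intro mult_right_mono) auto
qed

lemma summable_inverse_Suc_power: "2 \<le> s \<Longrightarrow> summable (\<lambda>n. 1 / real (Suc n) ^ s)"
  using inverse_power_summable[of s, where 'a=real]
  by (subst summable_Suc_iff) (simp add: inverse_eq_divide)

definition alternating_binomial_mat :: "nat \<Rightarrow> real Matrix.mat" where
  "alternating_binomial_mat k =
     Matrix.mat k k (\<lambda>(i, l). if l \<le> i then (-1)^(i - l) * real (i choose l) else 0)"

lemma det_alternating_binomial_mat: "Determinant.det (alternating_binomial_mat k) = 1"
proof -
  have "Determinant.det (alternating_binomial_mat k)
      = prod_list (diag_mat (alternating_binomial_mat k))"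
    by (rule det_lower_triangular[of k]) (auto simp: alternating_binomial_mat_def)
  then show ?thesis by (simp add: prod_list_diag_prod atLeast0LessThan alternating_binomial_mat_def)
qed

lemma alternating_binomial_mat_times_A_mat:
  assumes "i < k" "j < k" "j \<le> i"
  shows "(alternating_binomial_mat k * A_mat k) $$ (i, j) = (if j < i then 0 else (-1)^i)"
proof -
  have sign: "(-1)^(i - l) * real (i choose l) * ((- real (Suc l))^j / fact j)
      = (-1)^i * (-1)^j / fact j * ((-1)^l * real (i choose l) * (real l + 1)^j)" if "l \<le> i" for l
  proof -
    have "(- real (Suc l))^j = (-1)^j * (real l + 1)^j"
      by (subst power_minus) (simp add: add.commute)
    with that show ?thesis
      by (simp add: neg_one_power_add_eq_neg_one_power_diff[symmetric] power_add field_simps)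
  qed
  have "(alternating_binomial_mat k * A_mat k) $$ (i, j)
      = (\<Sum>l<k. (if l \<le> i then (-1)^(i - l) * real (i choose l) else 0)
                  * ((- real (Suc l))^j / fact j))"
    using assms by (simp add: alternating_binomial_mat_def A_mat_def scalar_prod_def atLeast0LessThan)
  also have "\<dots> = (\<Sum>l\<le>i. (-1)^(i - l) * real (i choose l) * ((- real (Suc l))^j / fact j))"
    using assms by (intro sum.mono_neutral_cong_right) auto
  also have "\<dots> = (-1)^i * (-1)^j / fact j * (\<Sum>l\<le>i. (-1)^l * real (i choose l) * (real l + 1)^j)"
    by (subst sum_distrib_left) (intro sum.cong refl sign, simp)
  also have "\<dots> = (if j < i then 0 else (-1)^i)"
    using alternating_binomial_sum_power[of j i 1] assms by (auto simp: power_add[symmetric])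
  finally show ?thesis .
qed

lemma det_A_mat: "Determinant.det (A_mat k) = (\<Prod>i<k. (-1)^i)"
proof -
  let ?W = "alternating_binomial_mat k"
  have W: "?W \<in> carrier_mat k k" and A: "A_mat k \<in> carrier_mat k k"
    by (simp_all add: alternating_binomial_mat_def A_mat_def)
  have "Determinant.det (A_mat k) = Determinant.det (?W * A_mat k)"
    using det_mult[OF W A] det_alternating_binomial_mat by simp
  also have "\<dots> = prod_list (diag_mat (?W * A_mat k))"
    by (rule det_upper_triangular[of _ k])
      (use W A alternating_binomial_mat_times_A_mat[of _ k] in \<open>auto simp: upper_triangular_def\<close>)
  also have "\<dots> = (\<Prod>i<k. (-1)^i)"
    using W A by (simp add: prod_list_diag_prod atLeast0LessThan alternating_binomial_mat_times_A_mat
        del: index_mult_mat(1))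
  finally show ?thesis .
qed

lemma det_A_mat_mult_4: "4 dvd k \<Longrightarrow> Determinant.det (A_mat k) = 1"
  by (auto simp: det_A_mat prod_neg_one_power_mult_4)

lemma A_mat_left_combination:
  assumes "j < k"
  shows "(\<Sum>i<k. (-1)^i * real (k choose Suc i) * A_mat k $$ (i, j)) = (if j = 0 then 1 else 0)"
proof -
  define f where "f l = (-1::real)^l * real (k choose l) * real l ^ j" for l
  have "(\<Sum>l\<le>k. f l) = 0"
    using alternating_binomial_sum_power[of j k "0::real"] assms by (simp add: f_def)
  then have "f 0 + (\<Sum>i<k. f (Suc i)) = 0"
    by (simp only: sum.atMost_shift)
  then have shifted: "(\<Sum>i<k. f (Suc i)) = - f 0" by simp
  have "(-1)^i * real (k choose Suc i) * A_mat k $$ (i, j) = - ((-1)^j / fact j) * f (Suc i)"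
    if "i < k" for i
  proof -
    have "(- real (Suc i))^j = (-1)^j * real (Suc i)^j"
      by (rule power_minus)
    with that assms show ?thesis by (simp add: A_mat_def f_def)
  qed
  then have "(\<Sum>i<k. (-1)^i * real (k choose Suc i) * A_mat k $$ (i, j))
      = - ((-1)^j / fact j) * (\<Sum>i<k. f (Suc i))"
    by (simp add: sum_distrib_left)
  also have "\<dots> = (if j = 0 then 1 else 0)"
    by (simp only: shifted) (simp add: f_def)
  finally show ?thesis .
qed

lemma RHS5_eq: "RHS5 k = (\<Sum>i<k. (-1)^i * real (k choose Suc i) * zeta_nat (i + 2)) - harm k"
proof -
  have "(\<Sum>i<k. (-1)^i * real (k choose Suc i) * zeta_nat (i + 2))
      = (\<Sum>m = 2..k + 1. (-1)^m * real (k choose (m - 1)) * zeta_nat m)"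
    by (rule sum.reindex_bij_witness[of _ "\<lambda>m. m - 2" "\<lambda>i. i + 2"]) auto
  then show ?thesis by (simp add: RHS5_def)
qed

lemma det_A1_mat:
  assumes "0 < k" and "Determinant.det (A_mat k) = 1"
  shows "Determinant.det (A1_mat k) = RHS5 k"
proof -
  have "A1_mat k = replace_col (A_mat k) (B_vec k) 0"
    by (rule eq_matI) (auto simp: A1_mat_def replace_col_def A_mat_def)
  then have "Determinant.det (A1_mat k) = (\<Sum>i<k. (-1)^i * real (k choose Suc i) * B_vec k $ i)"
    using det_replace_col_eq_left_combination[of "A_mat k" k "B_vec k" 0] A_mat_left_combination assms
    by (simp add: A_mat_def B_vec_def)
  also have "\<dots> = (\<Sum>i<k. (-1)^i * real (k choose Suc i) * zeta_nat (i + 2))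
      - (\<Sum>i<k. (-1)^i * real (k choose Suc i) / real (Suc i))"
    by (simp add: B_vec_def sum_subtractf right_diff_distrib)
  finally show ?thesis
    by (simp add: RHS5_eq harm_eq_alternating_binomial_sum)
qed

definition ratio :: "nat \<Rightarrow> real" where
  "ratio n = 1 - 1 / real (Suc n)"

definition zeta_part :: "nat \<Rightarrow> nat \<Rightarrow> real" where
  "zeta_part k n = (1 - ratio n ^ k) / real (Suc n)"

text \<open>The term j = 0 vanishes because x / 0 = 0.\<close>

definition log_partial :: "nat \<Rightarrow> nat \<Rightarrow> real" where
  "log_partial k n = (\<Sum>j\<le>k. ratio n ^ j / real j)"

definition harm_part :: "nat \<Rightarrow> nat \<Rightarrow> real" where
  "harm_part k n = log_partial k (Suc n) - log_partial k n"

definition gamma_part :: "nat \<Rightarrow> nat \<Rightarrow> real" where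
  "gamma_part k n = zeta_part k n - harm_part k n"

lemma zeta_part_eq:
  "zeta_part k n = (\<Sum>i<k. (-1)^i * real (k choose Suc i) * (1 / real (Suc n) ^ (i + 2)))"
proof -
  define x where "x = 1 / real (Suc n)"
  have "ratio n ^ k = (\<Sum>l\<le>k. real (k choose l) * (-x)^l * 1^(k - l))"
    unfolding binomial_ring[symmetric] by (simp add: ratio_def x_def)
  also have "\<dots> = 1 + (\<Sum>i<k. real (k choose Suc i) * (-x)^Suc i)"
    by (simp only: sum.atMost_shift) simp
  finally have expand: "1 - ratio n ^ k = (\<Sum>i<k. (-1)^i * real (k choose Suc i) * x^Suc i)"
    by (simp add: power_minus[of x] sum_negf ac_simps)
  have "zeta_part k n = x * (1 - ratio n ^ k)"
    by (simp add: zeta_part_def x_def)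
  also have "\<dots> = (\<Sum>i<k. (-1)^i * real (k choose Suc i) * x^(i + 2))"
    by (simp add: expand sum_distrib_left ac_simps)
  finally show ?thesis by (simp add: x_def power_one_over)
qed

lemma zeta_part_sums:
  "zeta_part k sums (\<Sum>i<k. (-1)^i * real (k choose Suc i) * zeta_nat (i + 2))"
proof -
  have "(\<lambda>n. \<Sum>i<k. (-1)^i * real (k choose Suc i) * (1 / real (Suc n) ^ (i + 2))) sums
      (\<Sum>i<k. (-1)^i * real (k choose Suc i) * (\<Sum>n. 1 / real (Suc n) ^ (i + 2)))"
    by (intro sums_sum sums_mult summable_sums summable_inverse_Suc_power) simp
  moreover have "zeta_part k
      = (\<lambda>n. \<Sum>i<k. (-1)^i * real (k choose Suc i) * (1 / real (Suc n) ^ (i + 2)))"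
    by (rule ext) (rule zeta_part_eq)
  ultimately show ?thesis by (simp only: zeta_nat_def)
qed

lemma log_partial_0: "log_partial k 0 = 0"
  by (auto simp: log_partial_def ratio_def power_0_left intro!: sum.neutral)

lemma harm_part_sums: "harm_part k sums harm k"
proof -
  have "ratio \<longlonglongrightarrow> 1 - 0"
    unfolding ratio_def inverse_eq_divide[symmetric]
    by (intro tendsto_diff tendsto_const LIMSEQ_inverse_real_of_nat)
  then have "(\<lambda>n. log_partial k n) \<longlonglongrightarrow> (\<Sum>j\<le>k. 1 ^ j / real j)"
    unfolding log_partial_def divide_inverse by (intro tendsto_sum tendsto_mult_right tendsto_power) simp
  also have "(\<Sum>j\<le>k. 1 ^ j / real j) = harm k"
    by (simp add: harm_def atMost_atLeast0 sum.atLeast_Suc_atMost divide_inverse)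
  finally have "log_partial k \<longlonglongrightarrow> harm k" .
  moreover have "harm_part k = (\<lambda>n. log_partial k (Suc n) - log_partial k n)"
    by (simp add: fun_eq_iff harm_part_def)
  ultimately show ?thesis
    using telescope_sums[of "log_partial k" "harm k"] by (simp add: log_partial_0)
qed

lemma harm_part_eq:
  "harm_part k n = (\<Sum>i<k. (ratio (Suc n) ^ Suc i - ratio n ^ Suc i) / real (Suc i))"
proof -
  have "harm_part k n = (\<Sum>j\<le>k. (ratio (Suc n) ^ j - ratio n ^ j) / real j)"
    by (simp add: harm_part_def log_partial_def sum_subtractf diff_divide_distrib)
  also have "\<dots> = (\<Sum>i<k. (ratio (Suc n) ^ Suc i - ratio n ^ Suc i) / real (Suc i))"
    by (simp only: sum.atMost_shift) simp
  finally show ?thesis .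
qed

lemma harm_part_bounds:
  shows "(1 - ratio n ^ k) / real (n + 2) \<le> harm_part k n"
    and "harm_part k n \<le> (1 - ratio (Suc n) ^ k) / real (Suc n)"
proof -
  define N where "N = real (Suc n)"
  define a where "a = ratio n"
  define b where "b = ratio (Suc n)"
  have N: "1 \<le> N" by (simp add: N_def)
  have a: "a = 1 - 1 / N" and b: "b = 1 - 1 / (N + 1)"
    by (simp_all add: a_def b_def N_def ratio_def)
  have "0 \<le> a" "a \<le> b" using N by (simp_all add: a b field_simps)
  note bounds = power_Suc_diff_bounds[OF this]
  have "b - a = (1 - a) / (N + 1)"
    using N by (simp add: a b field_simps)
  then have geometric_a: "(\<Sum>i<k. a^i * (b - a)) = (1 - a^k) / (N + 1)"
    unfolding sum_distrib_right[symmetric] one_diff_power_eq by simp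
  have "b - a = (1 - b) / N"
    using N by (simp add: a b field_simps)
  then have geometric_b: "(\<Sum>i<k. b^i * (b - a)) = (1 - b^k) / N"
    unfolding sum_distrib_right[symmetric] one_diff_power_eq by simp
  have "(1 - a^k) / (N + 1) \<le> harm_part k n"
    unfolding harm_part_eq a_def[symmetric] b_def[symmetric] geometric_a[symmetric]
    by (intro sum_mono bounds(1))
  then show "(1 - ratio n ^ k) / real (n + 2) \<le> harm_part k n"
    by (simp add: a_def N_def add.commute)
  have "harm_part k n \<le> (1 - b^k) / N"
    unfolding harm_part_eq a_def[symmetric] b_def[symmetric] geometric_b[symmetric]
    by (intro sum_mono bounds(2))
  then show "harm_part k n \<le> (1 - ratio (Suc n) ^ k) / real (Suc n)"
    by (simp add: b_def N_def)
qed

lemma abs_gamma_part_le: "\<bar>gamma_part k n\<bar> \<le> 1 / real (Suc n) ^ 2"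
proof -
  define N where "N = real (Suc n)"
  have N: "1 \<le> N" by (simp add: N_def)
  have "0 \<le> ratio n" "ratio n \<le> ratio (Suc n)" "ratio (Suc n) \<le> 1"
    by (simp_all add: ratio_def field_simps)
  then have powers: "0 \<le> ratio n ^ k" "ratio n ^ k \<le> ratio (Suc n) ^ k" "ratio (Suc n) ^ k \<le> 1"
    by (simp_all add: power_mono power_le_one)
  have "0 \<le> (1 - ratio n ^ k) / N - (1 - ratio (Suc n) ^ k) / N"
    using N powers by (simp add: diff_divide_distrib[symmetric])
  also have "\<dots> \<le> gamma_part k n"
    using harm_part_bounds(2)[of k n] by (simp add: gamma_part_def zeta_part_def N_def)
  finally have lower: "0 \<le> gamma_part k n" .
  have "gamma_part k n \<le> (1 - ratio n ^ k) / N - (1 - ratio n ^ k) / (N + 1)"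
    using harm_part_bounds(1)[of n k] by (simp add: gamma_part_def zeta_part_def N_def add.commute)
  also have "\<dots> = (1 - ratio n ^ k) / (N * (N + 1))"
    using N by (simp add: field_simps)
  also have "\<dots> \<le> 1 / (N * N)"
    using N powers by (intro frac_le) auto
  finally show ?thesis
    using lower by (simp add: N_def power2_eq_square)
qed

lemma log_partial_tendsto: "(\<lambda>k. log_partial k n) \<longlonglongrightarrow> ln (real (Suc n))"
proof -
  have "0 \<le> ratio n" "ratio n < 1"
    by (simp_all add: ratio_def field_simps)
  then have "(\<lambda>j. - ((- (- ratio n))^j) / of_nat j) sums ln (1 + - ratio n)"
    by (intro ln_series') auto
  then have "(\<lambda>j. ratio n ^ j / real j) sums ln (real (Suc n))"
    using sums_minus by (fastforce simp: ratio_def ln_div)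
  then have "(\<lambda>k. \<Sum>j<Suc k. ratio n ^ j / real j) \<longlonglongrightarrow> ln (real (Suc n))"
    unfolding sums_def by (rule LIMSEQ_Suc)
  then show ?thesis
    by (simp add: log_partial_def lessThan_Suc_atMost)
qed

lemma gamma_part_tendsto:
  "(\<lambda>k. gamma_part k n) \<longlonglongrightarrow> inverse (real (n + 1)) + ln (real (n + 1)) - ln (real (n + 2))"
proof -
  have "0 \<le> ratio n" "ratio n < 1"
    by (simp_all add: ratio_def field_simps)
  then have "(\<lambda>k. zeta_part k n) \<longlonglongrightarrow> (1 - 0) / real (Suc n)"
    unfolding zeta_part_def by (intro tendsto_intros LIMSEQ_power_zero) auto
  moreover have "(\<lambda>k. harm_part k n) \<longlonglongrightarrow> ln (real (Suc (Suc n))) - ln (real (Suc n))"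
    unfolding harm_part_def by (intro tendsto_diff log_partial_tendsto)
  ultimately have "(\<lambda>k. gamma_part k n)
      \<longlonglongrightarrow> (1 - 0) / real (Suc n) - (ln (real (Suc (Suc n))) - ln (real (Suc n)))"
    unfolding gamma_part_def by (rule tendsto_diff)
  then show ?thesis
    by (simp add: inverse_eq_divide algebra_simps)
qed

lemma RHS5_eq_suminf_gamma_part: "RHS5 k = (\<Sum>n. gamma_part k n)"
proof -
  have "(\<lambda>n. gamma_part k n) sums
      ((\<Sum>i<k. (-1)^i * real (k choose Suc i) * zeta_nat (i + 2)) - harm k)"
    unfolding gamma_part_def by (intro sums_diff zeta_part_sums harm_part_sums)
  then show ?thesis
    by (simp add: RHS5_eq sums_iff)
qed

lemma RHS5_tendsto_euler_mascheroni: "RHS5 \<longlonglongrightarrow> euler_mascheroni"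
proof -
  have "summable (\<lambda>n. 1 / real (Suc n) ^ 2)"
    by (rule summable_inverse_Suc_power) simp
  then have "(\<lambda>k. \<Sum>n. gamma_part k n)
      \<longlonglongrightarrow> (\<Sum>n. inverse (real (n + 1)) + ln (real (n + 1)) - ln (real (n + 2)))"
    using tannerys_theorem[where a = "\<lambda>n k. gamma_part k n" and F = sequentially
        and b = "\<lambda>n. inverse (real (n + 1)) + ln (real (n + 1)) - ln (real (n + 2))"
        and M = "\<lambda>n. 1 / real (Suc n) ^ 2"]
      gamma_part_tendsto abs_gamma_part_le
    by (auto intro: always_eventually)
  then show ?thesis
    using euler_mascheroni_sum_real by (simp add: RHS5_eq_suminf_gamma_part[abs_def] sums_iff)
qed

theorem mainTheorem5:
  shows "(\<forall>k::nat. 0 < k \<and> 4 dvd k \<longrightarrow> Determinant.det (A1_mat k) = RHS5 k)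
       \<and> (\<lambda>n. RHS5 (4 * Suc n)) \<longlonglongrightarrow> euler_mascheroni"
proof (intro conjI allI impI)
  fix k :: nat
  assume "0 < k \<and> 4 dvd k"
  then show "Determinant.det (A1_mat k) = RHS5 k"
    by (simp add: det_A1_mat det_A_mat_mult_4)
next
  have "strict_mono (\<lambda>n::nat. 4 * Suc n)"
    by (simp add: strict_mono_def)
  with RHS5_tendsto_euler_mascheroni show "(\<lambda>n. RHS5 (4 * Suc n)) \<longlonglongrightarrow> euler_mascheroni"
    by (rule LIMSEQ_subseq_LIMSEQ[unfolded comp_def])
qed

end
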